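(* Let $\alpha,\beta$ be relatively prime positive integers, let $n$ be a positive integer with $s=s(n)>2$, and let $(b,a)$ be an $n$-good pair. Then: (a) $a-\alpha b-\ell g_s$ is not a positive multiple of $\beta$ for any integer $\ell\ge0$; (b) a pair $(b',a')$ is $n$-good if and only if there exists $k\in\mathbb{Z}$ such that $a'=a+k\beta g_{s-2}\ge1$ and $b'=b-kg_{s-1}\ge1$; (c) with $a',b',k$ as in (b), $w_{s+1}(b',a')-w_{s+1}(b,a)=k(-\beta)^{s-1}$.
   Context: The $(\alpha,\beta)$-walk $w_k(a_1,a_2)$ for positive integers $a_1,a_2$ is given by $w_1=a_1$, $w_2=a_2$, $w_{k+2}=\alpha w_{k+1}+\beta w_k$ ($k\ge1$). For a positive integer $n$, $s(n;a_1,a_2)$ is the (largest) index $s$ with $w_s(a_1,a_2)=n$ ($-\infty$ if none), and $s(n)=\max_{a_1,a_2\ge1}s(n;a_1,a_2)$. A pair $(a_1,a_2)$ with $a_1,a_2\ge1$ is $n$-good if $s(n;a_1,a_2)=s(n)$. The sequence $g_k$: $g_1=1$, $g_2=\alpha$, $g_{k+2}=\alpha g_{k+1}+\beta g_k$ for $k\ge1$. *)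

theory Defs
  imports Main
begin

text \<open>The (alpha,beta)-walk; index k \<ge> 1 is meaningful (index 0 is an unused dummy).
  walk al be a1 a2 k = w_k(a1,a2).\<close>
fun walk :: "int \<Rightarrow> int \<Rightarrow> int \<Rightarrow> int \<Rightarrow> nat \<Rightarrow> int" where
  "walk al be a1 a2 0 = 0"
| "walk al be a1 a2 (Suc 0) = a1"
| "walk al be a1 a2 (Suc (Suc 0)) = a2"
| "walk al be a1 a2 (Suc (Suc (Suc k))) =
     al * walk al be a1 a2 (Suc (Suc k)) + be * walk al be a1 a2 (Suc k)"

fun gseq :: "int \<Rightarrow> int \<Rightarrow> nat \<Rightarrow> int" where
  "gseq al be 0 = 0"
| "gseq al be (Suc 0) = 1"
| "gseq al be (Suc (Suc k)) = al * gseq al be (Suc k) + be * gseq al be k"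

definition hit_set :: "int \<Rightarrow> int \<Rightarrow> int \<Rightarrow> int \<Rightarrow> int \<Rightarrow> nat set" where
  "hit_set al be n a1 a2 = {k. 1 \<le> k \<and> walk al be a1 a2 k = n}"

text \<open>s(n;a1,a2): largest index with w_s = n (only meaningful when hit_set is nonempty;
  otherwise it is -infinity, handled explicitly in n_good).\<close>
definition s_pair :: "int \<Rightarrow> int \<Rightarrow> int \<Rightarrow> int \<Rightarrow> int \<Rightarrow> nat" where
  "s_pair al be n a1 a2 = Max (hit_set al be n a1 a2)"

definition s_max :: "int \<Rightarrow> int \<Rightarrow> int \<Rightarrow> nat" where
  "s_max al be n = Max (\<Union>{hit_set al be n a1 a2 | a1 a2. 1 \<le> a1 \<and> 1 \<le> a2})"

definition n_good :: "int \<Rightarrow> int \<Rightarrow> int \<Rightarrow> int \<Rightarrow> int \<Rightarrow> bool" where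
  "n_good al be n a1 a2 \<longleftrightarrow> 1 \<le> a1 \<and> 1 \<le> a2 \<and> hit_set al be n a1 a2 \<noteq> {}
     \<and> s_pair al be n a1 a2 = s_max al be n"

end

theory Submission
  imports Defs
begin

(* Since w(k+2; x, y) = g(k+1) y + \<beta> g(k) x, a pair is n-good exactly when its walk hits n
   at index s = s(n).
   (a) If a = \<alpha> b + l g(s) + m \<beta> with m > 0, the walk starting at (m, b + l g(s-1)) hits n
   at index s + 1, contradicting the maximality of s.
   (b) Two walks agree at index s iff g(s-1) (a' - a) = \<beta> g(s-2) (b - b'); as g(s-1) is coprime
   to \<beta> g(s-2), this forces the stated shift.
   (c) Under that shift w(s+1) changes by k \<beta> (g(s) g(s-2) - g(s-1)^2), which is k (-\<beta>)^(s-1)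
   by the Cassini identity for g. *)

lemma walk_eq_gseq:
  "walk al be x y (Suc (Suc k)) = gseq al be (Suc k) * y + be * gseq al be k * x"
  by (induction al be k rule: gseq.induct) (simp_all add: algebra_simps)

lemma gseq_nonneg:
  assumes "0 \<le> al" "0 \<le> be"
  shows "0 \<le> gseq al be k"
  using assms by (induction al be k rule: gseq.induct) simp_all

lemma gseq_Suc_pos:
  assumes "0 < al" "0 \<le> be"
  shows "0 < gseq al be (Suc k)"
proof (induction k)
  case (Suc k)
  then show ?case
    using assms gseq_nonneg[of al be k] by (simp add: add_pos_nonneg)
qed simp

lemma gseq_Suc_ge:
  assumes "0 < al" "0 < be"
  shows "int k \<le> gseq al be (Suc k)"
proof (induction k)
  case (Suc k)
  show ?case
  proof (cases k)
    case 0
    then show ?thesis using assms by simp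
  next
    case (Suc j)
    have "1 \<le> be * gseq al be k"
      using assms gseq_Suc_pos[of al be j] Suc mult_mono[of 1 be 1 "gseq al be k"] by simp
    moreover have "gseq al be (Suc k) \<le> al * gseq al be (Suc k)"
      using assms gseq_Suc_pos[of al be k] by simp
    ultimately show ?thesis
      using \<open>int k \<le> gseq al be (Suc k)\<close> by simp
  qed
qed simp

lemma walk_ge_index:
  assumes "0 < al" "0 < be" "1 \<le> x" "1 \<le> y"
  shows "int k \<le> walk al be x y (Suc (Suc k))"
proof -
  have "gseq al be (Suc k) \<le> gseq al be (Suc k) * y"
    using assms gseq_Suc_pos[of al be k] by simp
  moreover have "0 \<le> be * gseq al be k * x"
    using assms gseq_nonneg[of al be k] by simp
  ultimately show ?thesis
    using gseq_Suc_ge[OF assms(1,2), of k] by (simp add: walk_eq_gseq)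
qed

lemma hit_set_subset:
  assumes "0 < al" "0 < be" "1 \<le> x" "1 \<le> y"
  shows "hit_set al be n x y \<subseteq> {..nat n + 2}"
proof
  fix j assume "j \<in> hit_set al be n x y"
  then have hit: "walk al be x y j = n" by (simp add: hit_set_def)
  show "j \<in> {..nat n + 2}"
  proof (cases "j \<le> 2")
    case False
    then obtain k where "j = Suc (Suc k)"
      by (metis add_2_eq_Suc le_add1 less_imp_Suc_add not_le)
    then show ?thesis
      using walk_ge_index[OF assms, of k] hit by simp
  qed simp
qed

lemma finite_hit_union:
  assumes "0 < al" "0 < be"
  shows "finite (\<Union>{hit_set al be n a1 a2 | a1 a2. 1 \<le> a1 \<and> 1 \<le> a2})"
  by (rule finite_subset[of _ "{..nat n + 2}"]) (use hit_set_subset[OF assms] in auto)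

lemma le_s_max:
  assumes "0 < al" "0 < be" "1 \<le> x" "1 \<le> y" "1 \<le> j" "walk al be x y j = n"
  shows "j \<le> s_max al be n"
  unfolding s_max_def
  by (rule Max_ge[OF finite_hit_union[OF assms(1,2)]]) (use assms in \<open>auto simp: hit_set_def\<close>)

lemma n_good_iff_walk:
  assumes "0 < al" "0 < be" "0 < s_max al be n"
  shows "n_good al be n x y \<longleftrightarrow> 1 \<le> x \<and> 1 \<le> y \<and> walk al be x y (s_max al be n) = n"
proof (cases "1 \<le> x \<and> 1 \<le> y")
  case True
  then have x: "1 \<le> x" and y: "1 \<le> y" by auto
  let ?H = "hit_set al be n x y"
  have fin: "finite ?H"
    using hit_set_subset[OF assms(1,2) x y] by (rule finite_subset) simp
  have pair_eq_max: "s_pair al be n x y = s_max al be n \<longleftrightarrow> s_max al be n \<in> ?H"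
    if "?H \<noteq> {}"
  proof
    assume "s_pair al be n x y = s_max al be n"
    then show "s_max al be n \<in> ?H"
      using Max_in[OF fin that] unfolding s_pair_def by simp
  next
    assume max_hit: "s_max al be n \<in> ?H"
    have "s_pair al be n x y \<in> ?H"
      using Max_in[OF fin that] unfolding s_pair_def .
    then have "s_pair al be n x y \<le> s_max al be n"
      using le_s_max[OF assms(1,2) x y] by (simp add: hit_set_def)
    moreover have "s_max al be n \<le> s_pair al be n x y"
      using Max_ge[OF fin max_hit] unfolding s_pair_def .
    ultimately show "s_pair al be n x y = s_max al be n" by simp
  qed
  moreover have "s_max al be n \<in> ?H \<longleftrightarrow> walk al be x y (s_max al be n) = n"
    using assms(3) by (simp add: hit_set_def)
  ultimately show ?thesis
    using x y unfolding n_good_def by blast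
qed (unfold n_good_def, blast)

lemma coprime_add_mult_left_iff:
  fixes a b c :: "'a :: semiring_gcd"
  shows "coprime (a + b * c) b \<longleftrightarrow> coprime a b"
  by (metis coprime_iff_gcd_eq_1 gcd.commute gcd_add_mult add.commute mult.commute)

lemma coprime_gseq_right:
  assumes "coprime al be"
  shows "coprime (gseq al be (Suc k)) be"
  by (induction k) (simp_all add: coprime_add_mult_left_iff assms)

lemma coprime_gseq_Suc:
  assumes "coprime al be"
  shows "coprime (gseq al be (Suc k)) (gseq al be k)"
proof (induction k)
  case (Suc k)
  have "coprime (be * gseq al be k) (gseq al be (Suc k))"
    using Suc coprime_gseq_right[OF assms, of k] by (simp add: coprime_commute)
  then show ?case
    using coprime_add_mult_left_iff[of "be * gseq al be k" "gseq al be (Suc k)" al]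
    by (simp add: algebra_simps)
qed simp

lemma gseq_cassini:
  "gseq al be (Suc (Suc k)) * gseq al be k - (gseq al be (Suc k))\<^sup>2 = - ((- be) ^ k)"
proof (induction k)
  case (Suc k)
  have "gseq al be (Suc (Suc (Suc k))) * gseq al be (Suc k) - (gseq al be (Suc (Suc k)))\<^sup>2
        = - be * (gseq al be (Suc (Suc k)) * gseq al be k - (gseq al be (Suc k))\<^sup>2)"
    by (simp add: algebra_simps power2_eq_square)
  then show ?case
    using Suc by simp
qed simp

lemma walk_prepend_shift:
  "walk al be m (b + l * gseq al be (Suc t)) (Suc (Suc (Suc t)))
     = walk al be b (al * b + l * gseq al be (Suc (Suc t)) + m * be) (Suc (Suc t))"
  by (simp add: walk_eq_gseq algebra_simps)

lemma walk_eq_iff_shift: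
  assumes "0 < al" "0 < be" "coprime al be"
  shows "walk al be x' y' (Suc (Suc t)) = walk al be x y (Suc (Suc t))
    \<longleftrightarrow> (\<exists>k. y' = y + k * be * gseq al be t \<and> x' = x - k * gseq al be (Suc t))"
    (is "?eq \<longleftrightarrow> ?shift")
proof
  let ?g = "gseq al be"
  assume ?eq
  then have eq: "?g (Suc t) * (y' - y) = (be * ?g t) * (x - x')"
    by (simp add: walk_eq_gseq algebra_simps)
  have "coprime (?g (Suc t)) (be * ?g t)"
    using coprime_gseq_Suc[OF assms(3)] coprime_gseq_right[OF assms(3)] by simp
  then have "?g (Suc t) dvd x - x'"
    using eq by (metis coprime_dvd_mult_right_iff dvd_triv_left)
  then obtain k where k: "x - x' = ?g (Suc t) * k" ..
  with eq have "?g (Suc t) * (y' - y) = ?g (Suc t) * (k * be * ?g t)"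
    by (simp add: algebra_simps)
  then have "y' - y = k * be * ?g t"
    using gseq_Suc_pos[OF assms(1), of be t] assms(2) by simp
  with k show ?shift
    by (intro exI[of _ k]) (simp add: algebra_simps)
qed (auto simp: walk_eq_gseq algebra_simps)

lemma walk_shift_diff:
  "walk al be (x - k * gseq al be (Suc t)) (y + k * be * gseq al be t) (Suc (Suc (Suc t)))
     - walk al be x y (Suc (Suc (Suc t))) = k * (- be) ^ Suc t"
proof -
  let ?g = "gseq al be"
  have "walk al be (x - k * ?g (Suc t)) (y + k * be * ?g t) (Suc (Suc (Suc t)))
          - walk al be x y (Suc (Suc (Suc t)))
        = k * be * (?g (Suc (Suc t)) * ?g t - (?g (Suc t))\<^sup>2)"
    unfolding walk_eq_gseq by (simp only: algebra_simps power2_eq_square)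
  also have "\<dots> = k * (- be) ^ Suc t"
    unfolding gseq_cassini by simp
  finally show ?thesis .
qed

lemma n_good_not_extendable:
  assumes "0 < al" "0 < be" "s_max al be n = Suc (Suc t)" "n_good al be n b a"
    and "0 \<le> l" "0 < m"
  shows "a - al * b - l * gseq al be (Suc (Suc t)) \<noteq> m * be"
proof
  have good: "1 \<le> b" "walk al be b a (Suc (Suc t)) = n"
    using assms(4) n_good_iff_walk[OF assms(1,2)] assms(3) by auto
  assume "a - al * b - l * gseq al be (Suc (Suc t)) = m * be"
  then have "a = al * b + l * gseq al be (Suc (Suc t)) + m * be"
    by linarith
  then have hit: "walk al be m (b + l * gseq al be (Suc t)) (Suc (Suc (Suc t))) = n"
    using good(2) by (simp only: walk_prepend_shift)
  have "1 \<le> b + l * gseq al be (Suc t)"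
    using good(1) assms(5) gseq_Suc_pos[OF assms(1), of be t] assms(2)
    by (simp add: add_increasing2)
  then have "Suc (Suc (Suc t)) \<le> s_max al be n"
    using le_s_max[OF assms(1,2) _ _ _ hit] assms(6) by simp
  with assms(3) show False by simp
qed

lemma n_good_iff_shift:
  assumes "0 < al" "0 < be" "coprime al be" "s_max al be n = Suc (Suc t)" "n_good al be n b a"
  shows "n_good al be n b' a' \<longleftrightarrow>
    (\<exists>k. a' = a + k * be * gseq al be t \<and> 1 \<le> a' \<and> b' = b - k * gseq al be (Suc t) \<and> 1 \<le> b')"
proof -
  note good_iff = n_good_iff_walk[OF assms(1,2), of n, unfolded assms(4)]
  have "walk al be b a (Suc (Suc t)) = n"
    using assms(5) good_iff by simp
  then show ?thesis
    using good_iff walk_eq_iff_shift[OF assms(1-3), of b' a' t b a] by auto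
qed

theorem lemma2p4:
  fixes al be n a b :: int
  assumes "0 < al" "0 < be" "coprime al be" "0 < n"
    and "s_max al be n > 2"
    and "n_good al be n b a"
  shows "(\<forall>l::int. 0 \<le> l \<longrightarrow>
            \<not> (\<exists>m::int. 0 < m \<and> a - al * b - l * gseq al be (s_max al be n) = m * be))
       \<and> (\<forall>b' a'. n_good al be n b' a' \<longleftrightarrow>
            (\<exists>k::int. a' = a + k * be * gseq al be (s_max al be n - 2) \<and> 1 \<le> a'
                    \<and> b' = b - k * gseq al be (s_max al be n - 1) \<and> 1 \<le> b'))
       \<and> (\<forall>b' a' (k::int). a' = a + k * be * gseq al be (s_max al be n - 2) \<and> 1 \<le> a'
                    \<and> b' = b - k * gseq al be (s_max al be n - 1) \<and> 1 \<le> b'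
            \<longrightarrow> walk al be b' a' (s_max al be n + 1) - walk al be b a (s_max al be n + 1)
                  = k * (- be) ^ (s_max al be n - 1))"
proof -
  define t where "t = s_max al be n - 2"
  have s: "s_max al be n = Suc (Suc t)"
    using assms(5) by (simp add: t_def)
  have idx: "s_max al be n - 2 = t" "s_max al be n - 1 = Suc t"
    "s_max al be n + 1 = Suc (Suc (Suc t))"
    using s by simp_all
  have part_a: "\<forall>l. 0 \<le> l \<longrightarrow>
      \<not> (\<exists>m. 0 < m \<and> a - al * b - l * gseq al be (Suc (Suc t)) = m * be)"
    using n_good_not_extendable[OF assms(1,2) s assms(6)] by blast
  have part_c: "\<forall>b' a' k. a' = a + k * be * gseq al be t \<and> 1 \<le> a'
      \<and> b' = b - k * gseq al be (Suc t) \<and> 1 \<le> b'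
      \<longrightarrow> walk al be b' a' (Suc (Suc (Suc t))) - walk al be b a (Suc (Suc (Suc t)))
        = k * (- be) ^ Suc t"
    using walk_shift_diff[of al be b _ t a] by blast
  show ?thesis
    unfolding idx unfolding s
    using part_a n_good_iff_shift[OF assms(1-3) s assms(6)] part_c by blast
qed

end
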